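(* Under the setting below (with $q<q_c$ and $\hat{q}<q_c$), the certainty-equivalence controller $\hat{u}_t=\hat{K}x_t$ with $\hat{K}=-(R+B^{\top}\hat{P}B)^{-1}B^{\top}\hat{P}A$ mean-square stabilizes the system $x_{t+1}=Ax_t+\lambda_tBu_t$ if $q$ and $\hat{q}$ satisfy $$Q+(1-q)\hat{K}^{\top}R\hat{K}-(q-\hat{q})A^{\top}\hat{P}B(R+B^{\top}\hat{P}B)^{-1}B^{\top}\hat{P}A>0,$$ where $\hat{P}$ is the positive definite solution of $\hat{P}=Q+A^{\top}\hat{P}A-(1-\hat{q})A^{\top}\hat{P}B(R+B^{\top}\hat{P}B)^{-1}B^{\top}\hat{P}A$. Moreover, if $\hat{q}\ge q$, this matrix inequality always holds.
   Context: Consider the discrete-time system $x_{t+1}=Ax_t+\lambda_tBu_t$, $t=0,1,2,\dots$, with $x_t\in\mathbb{R}^n$, $u_t\in\mathbb{R}^m$, $x_0$ having finite mean and variance, and $\{\lambda_t\}$ i.i.d. Bernoulli random variables with $\lambda_t=0$ with probability $q\in(0,1)$ (packet loss) and $\lambda_t=1$ with probability $1-q$. The cost is $J(x_0,\mathbf{u})=\mathbb{E}\{\sum_{t=0}^\infty x_t^{\top}Qx_t+\lambda_tu_t^{\top}Ru_t\}$ with $Q,R$ positive definite, and $(A,B)$ is stabilizable. Assume $q<q_c$, where $q_c$ is the critical loss probability guaranteeing existence of a positive definite solution $P$ to the modified Riccati equation $P=Q+A^{\top}PA-(1-q)A^{\top}PB(R+B^{\top}PB)^{-1}B^{\top}PA$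 (with $1/\prod_i|\lambda_i^u(A)|^2\le q_c\le 1/\max_i|\lambda_i^u(A)|^2$, $\lambda_i^u(A)$ the unstable eigenvalues of $A$). The unknown $q$ is estimated by $\hat{q}=\frac{1}{N_q}\sum_{i=1}^{N_q}(1-\lambda_i)$ from channel samples, and it is assumed that $\hat{q}<q_c$. The system is mean-square stable if $\lim_{t\to\infty}\mathbb{E}\{x_t^{\top}x_t\}=0$. *)

theory Defs
  imports "HOL-Probability.Probability"
begin

definition posdef :: "real^'n^'n \<Rightarrow> bool" where
  "posdef P \<longleftrightarrow> transpose P = P \<and> (\<forall>x. x \<noteq> 0 \<longrightarrow> x \<bullet> (P *v x) > 0)"

definition cmat :: "real^'n^'n \<Rightarrow> complex^'n^'n" where
  "cmat A = (\<chi> i j. complex_of_real (A $ i $ j))"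

definition schur_stable :: "real^'n^'n \<Rightarrow> bool" where
  "schur_stable A \<longleftrightarrow> (\<forall>z::complex. det (mat z - cmat A) = 0 \<longrightarrow> cmod z < 1)"

definition stabilizable :: "real^'n^'n \<Rightarrow> real^'m^'n \<Rightarrow> bool" where
  "stabilizable A B \<longleftrightarrow> (\<exists>K::real^'n^'m. schur_stable (A + B ** K))"

definition ric :: "real \<Rightarrow> real^'n^'n \<Rightarrow> real^'m^'n \<Rightarrow> real^'n^'n \<Rightarrow> real^'m^'m
                   \<Rightarrow> real^'n^'n \<Rightarrow> real^'n^'n" where
  "ric q A B Q R P = Q + transpose A ** P ** A
     - (1 - q) *\<^sub>R (transpose A ** P ** B ** matrix_inv (R + transpose B ** P ** B)
                      ** transpose B ** P ** A)"

definition qcrit :: "real^'n^'n \<Rightarrow> real^'m^'n \<Rightarrow> real^'n^'n \<Rightarrow> real^'m^'m \<Rightarrow> real" where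
  "qcrit A B Q R = Sup {r. 0 \<le> r \<and> r \<le> 1 \<and>
      (\<forall>q. 0 \<le> q \<and> q < r \<longrightarrow> (\<exists>P. posdef P \<and> P = ric q A B Q R P))}"

definition gain :: "real^'n^'n \<Rightarrow> real^'m^'n \<Rightarrow> real^'m^'m \<Rightarrow> real^'n^'n \<Rightarrow> real^'n^'m" where
  "gain A B R P = - (matrix_inv (R + transpose B ** P ** B) ** transpose B ** P ** A)"

fun traj :: "real^'n^'n \<Rightarrow> real^'m^'n \<Rightarrow> real^'n^'m \<Rightarrow> (nat \<Rightarrow> 'a \<Rightarrow> real)
             \<Rightarrow> ('a \<Rightarrow> real^'n) \<Rightarrow> nat \<Rightarrow> 'a \<Rightarrow> real^'n" where
  "traj A B K lam x0 0 w = x0 w"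
| "traj A B K lam x0 (Suc t) w =
     A *v traj A B K lam x0 t w + lam t w *\<^sub>R (B *v (K *v traj A B K lam x0 t w))"

end

theory Submission
  imports Defs
begin

text \<open>
  Let V(x) = x' P x, where P is the positive definite solution of the modified Riccati equation
  for the loss probability qhat, and let K be the certainty-equivalence gain. The state x_t
  depends only on x_0, lambda_0, ..., lambda_(t-1), so lambda_t is independent of it and
  E V(x_(t+1)) = E [q V(A x_t) + (1 - q) V((A + B K) x_t)]. Completing the square with
  R + B' P B and substituting the Riccati equation turns the integrand into
  V(x_t) - x_t' W x_t, with W the matrix of the hypothesis. If W is positive definite this
  gives E V(x_(t+1)) <= E V(x_t) - c E |x_t|^2, so the series of the E |x_t|^2 converges and
  its terms tend to 0. For q <= qhat, W is Q plus two positive semidefinite terms.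
\<close>

section \<open>Quadratic forms and the modified Riccati equation\<close>

abbreviation quad_form :: "real^'n^'n \<Rightarrow> real^'n \<Rightarrow> real" where
  "quad_form P x \<equiv> x \<bullet> (P *v x)"

abbreviation riccati_correction ::
    "real^'n^'n \<Rightarrow> real^'m^'n \<Rightarrow> real^'m^'m \<Rightarrow> real^'n^'n \<Rightarrow> real^'n^'n" where
  "riccati_correction A B R P \<equiv>
     transpose A ** P ** B ** matrix_inv (R + transpose B ** P ** B) ** transpose B ** P ** A"

abbreviation stability_margin :: "real \<Rightarrow> real \<Rightarrow> real^'n^'n \<Rightarrow> real^'m^'n \<Rightarrow> real^'n^'n
    \<Rightarrow> real^'m^'m \<Rightarrow> real^'n^'n \<Rightarrow> real^'n^'n" where
  "stability_margin q qh A B Q R P \<equiv>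
     Q + (1 - q) *\<^sub>R (transpose (gain A B R P) ** R ** gain A B R P)
       - (q - qh) *\<^sub>R riccati_correction A B R P"

lemma inner_matrix_vector_transpose:
  fixes M :: "real^'n^'m"
  shows "(M *v x) \<bullet> y = x \<bullet> (transpose M *v y)"
  by (metis dot_lmul_matrix vector_transpose_matrix)

lemma quad_form_congruence:
  fixes C :: "real^'n^'m" and P :: "real^'m^'m"
  shows "quad_form (transpose C ** P ** C) x = quad_form P (C *v x)"
  by (simp add: matrix_vector_mul_assoc[symmetric] inner_matrix_vector_transpose)

lemma quad_form_scaleR: "quad_form (c *\<^sub>R M) x = c * quad_form M x"
  by (simp add: scaleR_matrix_vector_assoc[symmetric])

lemma quad_form_add: "quad_form (M + N) x = quad_form M x + quad_form N x"
  by (simp add: matrix_vector_mult_add_rdistrib inner_add_right)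

lemma quad_form_diff: "quad_form (M - N) x = quad_form M x - quad_form N x"
  by (simp add: matrix_vector_mult_diff_rdistrib inner_diff_right)

lemma matrix_transpose_add: "transpose (X + Y) = transpose X + transpose (Y :: real^'n^'m)"
  by (simp add: transpose_def vec_eq_iff)

lemma matrix_transpose_diff: "transpose (X - Y) = transpose X - transpose (Y :: real^'n^'m)"
  by (simp add: transpose_def vec_eq_iff)

lemma matrix_vector_mult_uminus_left: "(- A) *v x = - (A *v (x :: real^'n))"
  by (simp add: matrix_vector_mult_def vec_eq_iff sum_negf)

lemma matrix_vector_mult_uminus_right: "A *v (- x) = - (A *v (x :: real^'n))"
  by (simp add: matrix_vector_mult_def vec_eq_iff sum_negf)

lemma posdef_nonneg: "posdef P \<Longrightarrow> 0 \<le> quad_form P x"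
  unfolding posdef_def by (cases "x = 0") (auto intro: less_imp_le)

lemma posdef_transpose: "posdef P \<Longrightarrow> transpose P = P"
  by (simp add: posdef_def)

lemma posdef_inner_symmetric: "posdef P \<Longrightarrow> x \<bullet> (P *v y) = y \<bullet> (P *v x)"
  using inner_matrix_vector_transpose[of P y x] by (simp add: posdef_def inner_commute)

lemma posdef_quad_form_lower_bound:
  fixes P :: "real^'n^'n"
  assumes "posdef P"
  obtains c where "c > 0" "\<And>x. c * (x \<bullet> x) \<le> quad_form P x"
proof -
  have "continuous_on (sphere 0 1) (\<lambda>x::real^'n. quad_form P x)"
    by (intro continuous_intros linear_continuous_on matrix_vector_mul_bounded_linear)
  moreover have "sphere (0::real^'n) 1 \<noteq> {}" by simp
  ultimately obtain u where u: "u \<in> sphere 0 1"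
    and u_min: "\<forall>v\<in>sphere 0 1. quad_form P u \<le> quad_form P v"
    using continuous_attains_inf[OF compact_sphere] by blast
  have "u \<noteq> 0" using u by auto
  then have pos: "quad_form P u > 0" using assms unfolding posdef_def by blast
  have "quad_form P u * (x \<bullet> x) \<le> quad_form P x" for x
  proof (cases "x = 0")
    case False
    define v where "v = (1 / norm x) *\<^sub>R x"
    have "quad_form P (norm x *\<^sub>R v) = (norm x)\<^sup>2 * quad_form P v"
      by (simp add: matrix_vector_mult_scaleR power2_eq_square)
    moreover have "norm x *\<^sub>R v = x" using False by (simp add: v_def)
    ultimately have "quad_form P x = (norm x)\<^sup>2 * quad_form P v" by simp
    moreover have "v \<in> sphere 0 1" using False by (simp add: v_def)
    then have "quad_form P u \<le> quad_form P v" using u_min by blast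
    moreover have "quad_form P u * (x \<bullet> x) \<le> quad_form P v * (x \<bullet> x)"
      using \<open>quad_form P u \<le> quad_form P v\<close> by (rule mult_right_mono) simp
    ultimately show ?thesis by (simp add: power2_norm_eq_inner mult.commute)
  qed simp
  with pos that show ?thesis by blast
qed

lemma posdef_add_congruence:
  fixes P :: "real^'n^'n" and R :: "real^'m^'m" and B :: "real^'m^'n"
  assumes R: "posdef R" and P: "posdef P"
  shows "posdef (R + transpose B ** P ** B)"
  unfolding posdef_def
proof (intro conjI allI impI)
  show "transpose (R + transpose B ** P ** B) = R + transpose B ** P ** B"
    using P R by (simp add: posdef_def matrix_transpose_add matrix_transpose_mul matrix_mul_assoc)
  fix x :: "real^'m"
  assume "x \<noteq> 0"
  then have "quad_form R x > 0" using R by (simp add: posdef_def)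
  with posdef_nonneg[OF P, of "B *v x"] show "quad_form (R + transpose B ** P ** B) x > 0"
    by (simp add: matrix_vector_mult_add_rdistrib inner_add_right quad_form_congruence)
qed

lemma matrix_inv_right: "invertible S \<Longrightarrow> S ** matrix_inv S = mat 1"
  unfolding invertible_def matrix_inv_def by (rule someI_ex[THEN conjunct1])

lemma posdef_matrix_inv:
  fixes S :: "real^'m^'m"
  assumes S: "posdef S"
  shows "S ** matrix_inv S = mat 1" and "transpose (matrix_inv S) = matrix_inv S"
proof -
  have "S *v x = 0 \<Longrightarrow> x = 0" for x
    using S unfolding posdef_def by (metis inner_zero_right less_irrefl)
  then obtain C where "C ** S = mat 1"
    using matrix_left_invertible_ker by blast
  then have "invertible S"
    unfolding invertible_def using matrix_left_right_inverse by blast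
  then show inv: "S ** matrix_inv S = mat 1"
    by (simp add: matrix_inv_right)
  have "transpose (matrix_inv S) = transpose (matrix_inv S) ** (S ** matrix_inv S)"
    by (simp add: inv)
  also have "\<dots> = transpose (S ** matrix_inv S) ** matrix_inv S"
    using S by (simp add: posdef_def matrix_transpose_mul matrix_mul_assoc)
  finally show "transpose (matrix_inv S) = matrix_inv S" by (simp add: inv)
qed

lemma gain_normal_equation:
  fixes P :: "real^'n^'n" and R :: "real^'m^'m"
  assumes P: "posdef P" and R: "posdef R"
  shows "(R + transpose B ** P ** B) *v (gain A B R P *v x) = - (transpose B *v (P *v (A *v x)))"
proof -
  define S where "S = R + transpose B ** P ** B"
  define u where "u = transpose B *v (P *v (A *v x))"
  have "S ** matrix_inv S = mat 1"
    unfolding S_def by (rule posdef_matrix_inv(1)[OF posdef_add_congruence[OF R P]])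
  have "gain A B R P *v x = - (matrix_inv S *v u)"
    by (simp add: gain_def S_def u_def matrix_vector_mul_assoc matrix_mul_assoc
                  matrix_vector_mult_uminus_left del: transpose_matrix_vector)
  then have "S *v (gain A B R P *v x) = - ((S ** matrix_inv S) *v u)"
    by (simp add: matrix_vector_mult_uminus_right matrix_vector_mul_assoc)
  also have "\<dots> = - u"
    by (simp add: \<open>S ** matrix_inv S = mat 1\<close> matrix_vector_mul_lid)
  finally show ?thesis unfolding S_def u_def .
qed

lemma quad_form_riccati_correction:
  fixes P :: "real^'n^'n" and R :: "real^'m^'m"
  assumes P: "posdef P" and R: "posdef R"
  shows "quad_form (riccati_correction A B R P) x
       = quad_form (R + transpose B ** P ** B) (gain A B R P *v x)"
proof -
  define S where "S = R + transpose B ** P ** B"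
  define u where "u = transpose B *v (P *v (A *v x))"
  have gain: "gain A B R P *v x = - (matrix_inv S *v u)"
    by (simp add: gain_def S_def u_def matrix_vector_mul_assoc matrix_mul_assoc
                  matrix_vector_mult_uminus_left del: transpose_matrix_vector)
  have "quad_form (riccati_correction A B R P) x
      = x \<bullet> (transpose A *v (P *v (B *v (matrix_inv S *v u))))"
    by (simp add: S_def u_def matrix_vector_mul_assoc matrix_mul_assoc del: transpose_matrix_vector)
  also have "\<dots> = (P *v (A *v x)) \<bullet> (B *v (matrix_inv S *v u))"
    using posdef_transpose[OF P] by (simp add: inner_matrix_vector_transpose del: transpose_matrix_vector)
  also have "\<dots> = u \<bullet> (matrix_inv S *v u)"
    by (simp add: u_def inner_matrix_vector_transpose del: transpose_matrix_vector)
  also have "\<dots> = (gain A B R P *v x) \<bullet> (- u)"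
    by (simp add: gain inner_commute)
  also have "\<dots> = quad_form S (gain A B R P *v x)"
    unfolding S_def u_def gain_normal_equation[OF P R] ..
  finally show ?thesis unfolding S_def .
qed

lemma quad_form_closed_loop:
  fixes P :: "real^'n^'n" and R :: "real^'m^'m"
  assumes P: "posdef P" and R: "posdef R"
  shows "quad_form P (A *v x + B *v (gain A B R P *v x))
       = quad_form P (A *v x) - quad_form (riccati_correction A B R P) x
         - quad_form (transpose (gain A B R P) ** R ** gain A B R P) x"
proof -
  define S where "S = R + transpose B ** P ** B"
  define y where "y = gain A B R P *v x"
  have "(B *v y) \<bullet> (P *v (A *v x)) = y \<bullet> (transpose B *v (P *v (A *v x)))"
    by (rule inner_matrix_vector_transpose)
  also have "\<dots> = - quad_form S y"
  proof -
    have "S *v y = - (transpose B *v (P *v (A *v x)))"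
      unfolding S_def y_def by (rule gain_normal_equation[OF P R])
    then show ?thesis by (simp del: transpose_matrix_vector)
  qed
  finally have "(B *v y) \<bullet> (P *v (A *v x)) = - quad_form S y" .
  moreover have "quad_form P (B *v y) = quad_form S y - quad_form R y"
    by (simp add: S_def matrix_vector_mult_add_rdistrib inner_add_right quad_form_congruence)
  ultimately have "quad_form P (A *v x + B *v y) = quad_form P (A *v x) - quad_form S y - quad_form R y"
    using posdef_inner_symmetric[OF P, of "A *v x" "B *v y"]
    by (simp add: matrix_vector_right_distrib inner_add_left inner_add_right)
  then show ?thesis
    by (simp add: S_def y_def quad_form_riccati_correction[OF P R] quad_form_congruence)
qed

lemma quad_form_stability_margin:
  "quad_form (stability_margin q qh A B Q R P) x
     = quad_form Q x + (1 - q) * quad_form (transpose (gain A B R P) ** R ** gain A B R P) x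
       - (q - qh) * quad_form (riccati_correction A B R P) x"
  by (simp add: quad_form_add quad_form_diff quad_form_scaleR)

lemma riccati_lyapunov_identity:
  fixes P Q :: "real^'n^'n" and R :: "real^'m^'m"
  assumes P: "posdef P" and R: "posdef R" and riccati: "P = ric qh A B Q R P"
  shows "q * quad_form P (A *v x) + (1 - q) * quad_form P (A *v x + B *v (gain A B R P *v x))
       = quad_form P x - quad_form (stability_margin q qh A B Q R P) x"
proof -
  have "quad_form P x = quad_form (ric qh A B Q R P) x"
    using riccati by (rule arg_cong[where f = "\<lambda>M. quad_form M x"])
  also have "\<dots>
      = quad_form Q x + quad_form P (A *v x) - (1 - qh) * quad_form (riccati_correction A B R P) x"
    by (simp add: ric_def quad_form_add quad_form_diff quad_form_scaleR quad_form_congruence)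
  finally have Px: "quad_form P x = \<dots>" .
  show ?thesis
    unfolding quad_form_closed_loop[OF P R] quad_form_stability_margin Px
    by (simp add: algebra_simps)
qed

lemma stability_margin_posdef:
  fixes P Q :: "real^'n^'n" and R :: "real^'m^'m"
  assumes P: "posdef P" and R: "posdef R" and Q: "posdef Q" and "q \<le> qh" "q \<le> 1"
  shows "posdef (stability_margin q qh A B Q R P)"
  unfolding posdef_def
proof (intro conjI allI impI)
  show "transpose (stability_margin q qh A B Q R P) = stability_margin q qh A B Q R P"
    using posdef_matrix_inv(2)[OF posdef_add_congruence[OF R P]]
    by (simp add: matrix_transpose_add matrix_transpose_diff transpose_scalar matrix_transpose_mul
                  matrix_mul_assoc posdef_transpose[OF P] posdef_transpose[OF R] posdef_transpose[OF Q])
  fix x :: "real^'n"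
  assume "x \<noteq> 0"
  then have "quad_form Q x > 0" using Q by (simp add: posdef_def)
  moreover have "0 \<le> (1 - q) * quad_form (transpose (gain A B R P) ** R ** gain A B R P) x"
    using posdef_nonneg[OF R] \<open>q \<le> 1\<close> by (simp add: quad_form_congruence)
  moreover have "(q - qh) * quad_form (riccati_correction A B R P) x \<le> 0"
    using posdef_nonneg[OF posdef_add_congruence[OF R P]] \<open>q \<le> qh\<close>
    by (simp add: quad_form_riccati_correction[OF P R] mult_nonpos_nonneg)
  ultimately show "quad_form (stability_margin q qh A B Q R P) x > 0"
    unfolding quad_form_stability_margin by linarith
qed

section \<open>Mean-square stability of the closed loop\<close>

lemma tendsto_zero_of_lyapunov_decrease:
  fixes V N :: "nat \<Rightarrow> real"
  assumes "0 < c" and N_nonneg: "\<And>t. 0 \<le> N t" and V_nonneg: "\<And>t. 0 \<le> V t"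
    and decrease: "\<And>t. V (Suc t) \<le> V t - c * N t"
  shows "N \<longlonglongrightarrow> 0"
proof -
  have partial_sum: "c * (\<Sum>t<n. N t) \<le> V 0 - V n" for n
  proof (induction n)
    case (Suc n)
    then show ?case using decrease[of n] by (simp add: distrib_left)
  qed simp
  have "(\<Sum>t\<le>n. N t) \<le> V 0 / c" for n
    using partial_sum[of "Suc n"] V_nonneg[of "Suc n"] \<open>0 < c\<close>
    by (simp add: lessThan_Suc_atMost pos_le_divide_eq mult.commute)
  then have "summable N"
    by (rule bounded_imp_summable[OF N_nonneg])
  then show ?thesis
    by (rule summable_LIMSEQ_zero)
qed

lemma abs_quad_form_le: "\<bar>quad_form P x\<bar> \<le> onorm ((*v) P) * (norm x)\<^sup>2"
proof -
  have "\<bar>quad_form P x\<bar> \<le> norm x * norm (P *v x)"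
    by (rule Cauchy_Schwarz_ineq2)
  also have "\<dots> \<le> norm x * (onorm ((*v) P) * norm x)"
    by (intro mult_left_mono onorm matrix_vector_mul_bounded_linear) simp
  finally show ?thesis
    by (simp add: power2_eq_square mult.commute mult.left_commute)
qed

lemma borel_measurable_matrix_vector_mult [measurable]:
  fixes A :: "real^'n^'m"
  shows "f \<in> borel_measurable N \<Longrightarrow> (\<lambda>x. A *v f x) \<in> borel_measurable N"
  using borel_measurable_continuous_on[OF linear_continuous_on[OF matrix_vector_mul_bounded_linear]]
  by blast

lemma measurable_traj:
  assumes x0 [measurable]: "x0 \<in> borel_measurable N"
    and lam: "\<And>i. i < t \<Longrightarrow> lam i \<in> borel_measurable N"
  shows "traj A B K lam x0 t \<in> borel_measurable N"
  using lam
proof (induction t)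
  case (Suc t)
  then have [measurable]: "traj A B K lam x0 t \<in> borel_measurable N" "lam t \<in> borel_measurable N"
    by simp_all
  show ?case by simp
next
  case 0
  have "traj A B K lam x0 0 = x0" by (simp add: fun_eq_iff)
  then show ?case by simp
qed

lemma traj_norm_bound:
  assumes lam: "\<And>t w. w \<in> S \<Longrightarrow> \<bar>lam t w\<bar> \<le> 1"
  shows "\<exists>C. \<forall>w\<in>S. norm (traj A B K lam x0 t w) \<le> C * norm (x0 w)"
proof -
  define a where "a = onorm ((*v) A)"
  define b where "b = onorm ((*v) (B ** K))"
  have a: "norm (A *v x) \<le> a * norm x" and b: "norm ((B ** K) *v x) \<le> b * norm x" for x
    unfolding a_def b_def by (intro onorm matrix_vector_mul_bounded_linear)+
  have "0 \<le> a" "0 \<le> b"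
    unfolding a_def b_def by (intro onorm_pos_le matrix_vector_mul_bounded_linear)+
  have "norm (traj A B K lam x0 t w) \<le> (a + b) ^ t * norm (x0 w)" if "w \<in> S" for w
  proof (induction t)
    case (Suc t)
    define x where "x = traj A B K lam x0 t w"
    have "norm (traj A B K lam x0 (Suc t) w) \<le> norm (A *v x) + \<bar>lam t w\<bar> * norm ((B ** K) *v x)"
      using norm_triangle_ineq[of "A *v x" "lam t w *\<^sub>R ((B ** K) *v x)"]
      by (simp add: x_def matrix_vector_mul_assoc)
    also have "\<dots> \<le> a * norm x + 1 * (b * norm x)"
      using a[of x] b[of x] lam[OF that, of t] by (intro add_mono mult_mono) auto
    also have "\<dots> \<le> (a + b) * ((a + b) ^ t * norm (x0 w))"
      using Suc \<open>0 \<le> a\<close> \<open>0 \<le> b\<close> by (simp add: x_def distrib_right[symmetric] mult_left_mono)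
    finally show ?case by (simp add: mult.assoc)
  qed simp
  then show ?thesis by blast
qed

lemma sets_PiM_prefix:
  fixes Y :: "nat \<Rightarrow> real set"
  assumes "\<And>i. Y i \<in> sets borel"
  shows "{g \<in> space (Pi\<^sub>M UNIV (\<lambda>_. borel)). \<forall>i<t. g i \<in> Y i} \<in> sets (Pi\<^sub>M UNIV (\<lambda>_. borel))"
  using assms by measurable

locale packet_loss_channel = prob_space M for M :: "'a measure" +
  fixes x0 :: "'a \<Rightarrow> real^'n" and lam :: "nat \<Rightarrow> 'a \<Rightarrow> real" and q :: real
  assumes x0_measurable [measurable]: "x0 \<in> borel_measurable M"
    and x0_square_integrable: "integrable M (\<lambda>w. norm (x0 w) ^ 2)"
    and lam_values: "\<And>t w. w \<in> space M \<Longrightarrow> lam t w \<in> {0, 1}"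
    and lam_indep: "indep_vars (\<lambda>_. borel) lam UNIV"
    and lam_loss_prob: "\<And>t. prob {w \<in> space M. lam t w = 0} = q"
    and x0_indep_lam: "indep_set (sets (vimage_algebra (space M) x0 borel))
      (sets (vimage_algebra (space M) (\<lambda>w t. lam t w) (Pi\<^sub>M UNIV (\<lambda>_. borel))))"
begin

lemma lam_measurable [measurable]: "lam t \<in> borel_measurable M"
  using lam_indep unfolding indep_vars_def2 by auto

lemma abs_lam_le_1: "w \<in> space M \<Longrightarrow> \<bar>lam t w\<bar> \<le> 1"
  using lam_values[of w t] by auto

lemma traj_measurable [measurable]: "traj A B K lam x0 t \<in> borel_measurable M"
  by (rule measurable_traj) simp_all

lemma integrable_quad_form_traj: "integrable M (\<lambda>w. quad_form P (traj A B K lam x0 t w))"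
proof -
  let ?x = "traj A B K lam x0 t"
  obtain C where C: "\<forall>w\<in>space M. norm (?x w) \<le> C * norm (x0 w)"
    using traj_norm_bound[where S = "space M" and lam = lam, OF abs_lam_le_1] by blast
  define D where "D = onorm ((*v) P)"
  have "0 \<le> D"
    unfolding D_def by (intro onorm_pos_le matrix_vector_mul_bounded_linear)
  show ?thesis
  proof (rule Bochner_Integration.integrable_bound)
    show "integrable M (\<lambda>w. D * C\<^sup>2 * norm (x0 w) ^ 2)"
      using x0_square_integrable by simp
    show "(\<lambda>w. quad_form P (?x w)) \<in> borel_measurable M"
      by measurable
    have "norm (quad_form P (?x w)) \<le> norm (D * C\<^sup>2 * norm (x0 w) ^ 2)" if "w \<in> space M" for w
    proof -
      have "norm (quad_form P (?x w)) \<le> D * (norm (?x w))\<^sup>2"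
        using abs_quad_form_le[where P = P and x = "?x w"] by (simp add: D_def)
      also have "\<dots> \<le> D * (C * norm (x0 w))\<^sup>2"
        using C that \<open>0 \<le> D\<close> by (intro mult_left_mono power_mono) auto
      also have "\<dots> = norm (D * C\<^sup>2 * norm (x0 w) ^ 2)"
        using \<open>0 \<le> D\<close> by (simp add: power_mult_distrib)
      finally show ?thesis .
    qed
    then show "AE w in M. norm (quad_form P (?x w)) \<le> norm (D * C\<^sup>2 * norm (x0 w) ^ 2)"
      by (rule AE_I2)
  qed
qed

lemma integrable_quad_form_matrix_traj:
  fixes F :: "real^'n^'k" and P :: "real^'k^'k"
  shows "integrable M (\<lambda>w. quad_form P (F *v traj A B K lam x0 t w))"
  using integrable_quad_form_traj[where P = "transpose F ** P ** F"] by (simp add: quad_form_congruence)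

lemma integrable_quad_form_closed_loop:
  "integrable M (\<lambda>w. quad_form P (A *v traj A' B' K' lam x0 t w + B *v (K *v traj A' B' K' lam x0 t w)))"
  using integrable_quad_form_matrix_traj[where F = "A + B ** K"]
  by (simp add: matrix_vector_mult_add_rdistrib matrix_vector_mul_assoc)

lemma integrable_inner_traj: "integrable M (\<lambda>w. traj A B K lam x0 t w \<bullet> traj A B K lam x0 t w)"
  using integrable_quad_form_traj[where P = "mat 1"] by (simp add: matrix_vector_mul_lid)

lemma integrable_lam: "integrable M (lam t)"
proof (rule integrable_const_bound[where B = 1])
  have "norm (lam t w) \<le> 1" if "w \<in> space M" for w
    using abs_lam_le_1[OF that] by simp
  then show "AE w in M. norm (lam t w) \<le> 1"
    by (rule AE_I2)
qed simp

lemma integral_lam: "(\<integral>w. lam t w \<partial>M) = 1 - q"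
proof -
  have "(\<integral>w. lam t w \<partial>M) = (\<integral>w. indicator (space M - {w \<in> space M. lam t w = 0}) w \<partial>M)"
    using lam_values by (intro Bochner_Integration.integral_cong) (auto simp: indicator_def)
  also have "\<dots> = 1 - q"
    using prob_compl[of "{w \<in> space M. lam t w = 0}"] lam_loss_prob[of t] by simp
  finally show ?thesis .
qed

text \<open>Generators of the sigma-algebra of x_0, lambda_0, ..., lambda_(t-1).\<close>

definition history :: "nat \<Rightarrow> 'a set set" where
  "history t = {{w \<in> space M. x0 w \<in> X \<and> (\<forall>i<t. lam i w \<in> Y i)} | X Y.
     X \<in> sets borel \<and> (\<forall>i. Y i \<in> sets (borel :: real measure))}"

lemma history_eventI:
  assumes "X \<in> sets borel" and "\<And>i. Y i \<in> sets borel"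
  shows "{w \<in> space M. x0 w \<in> X \<and> (\<forall>i<t. lam i w \<in> Y i)} \<in> history t"
  unfolding history_def by (rule CollectI, rule exI[of _ X], rule exI[of _ Y]) (simp add: assms)

lemma history_eventE:
  assumes "a \<in> history t"
  obtains X Y where "X \<in> sets borel" and "\<forall>i. Y i \<in> sets (borel :: real measure)"
    and "a = {w \<in> space M. x0 w \<in> X \<and> (\<forall>i<t. lam i w \<in> Y i)}"
  using assms unfolding history_def by blast

lemma history_subset_events: "history t \<subseteq> events"
  by (auto elim: history_eventE)

lemma Int_stable_history: "Int_stable (history t)"
proof (rule Int_stableI)
  fix a b
  assume "a \<in> history t" "b \<in> history t"
  obtain X Y where "X \<in> sets borel" "\<forall>i. Y i \<in> sets (borel :: real measure)"
    and "a = {w \<in> space M. x0 w \<in> X \<and> (\<forall>i<t. lam i w \<in> Y i)}"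
    using \<open>a \<in> history t\<close> by (rule history_eventE)
  moreover obtain X' Y' where "X' \<in> sets borel" "\<forall>i. Y' i \<in> sets (borel :: real measure)"
    and "b = {w \<in> space M. x0 w \<in> X' \<and> (\<forall>i<t. lam i w \<in> Y' i)}"
    using \<open>b \<in> history t\<close> by (rule history_eventE)
  ultimately have "a \<inter> b = {w \<in> space M. x0 w \<in> X \<inter> X' \<and> (\<forall>i<t. lam i w \<in> Y i \<inter> Y' i)}"
    by auto
  also have "\<dots> \<in> history t"
    using \<open>X \<in> sets borel\<close> \<open>X' \<in> sets borel\<close> \<open>\<forall>i. Y i \<in> sets borel\<close> \<open>\<forall>i. Y' i \<in> sets borel\<close>
    by (intro history_eventI) auto
  finally show "a \<inter> b \<in> history t" .
qed

lemma prob_lam_prefix: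
  assumes "\<And>i. Y i \<in> sets borel"
  shows "prob {w \<in> space M. \<forall>i<t. lam i w \<in> Y i} = (\<Prod>i<t. prob (lam i -` Y i \<inter> space M))"
proof (cases "t = 0")
  case False
  have "{w \<in> space M. \<forall>i<t. lam i w \<in> Y i} = (\<Inter>i\<in>{..<t}. lam i -` Y i \<inter> space M)"
    using False by auto
  then show ?thesis
    using indep_varsD[OF lam_indep, of "{..<t}" Y] assms False by (simp add: lessThan_empty_iff)
qed (simp add: prob_space)

lemma prob_history_event:
  assumes X: "X \<in> sets borel" and Y: "\<And>i. Y i \<in> sets borel"
  shows "prob {w \<in> space M. x0 w \<in> X \<and> (\<forall>i<t. lam i w \<in> Y i)}
       = prob (x0 -` X \<inter> space M) * (\<Prod>i<t. prob (lam i -` Y i \<inter> space M))"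
proof -
  let ?L = "{w \<in> space M. \<forall>i<t. lam i w \<in> Y i}"
  have "(\<lambda>w i. lam i w) -` {g \<in> space (Pi\<^sub>M UNIV (\<lambda>_. borel)). \<forall>i<t. g i \<in> Y i} \<inter> space M = ?L"
    by (auto simp: space_PiM)
  with in_vimage_algebra[OF sets_PiM_prefix[where Y = Y and t = t, OF Y], where f = "\<lambda>w i. lam i w" and X = "space M"]
  have L: "?L \<in> sets (vimage_algebra (space M) (\<lambda>w t. lam t w) (Pi\<^sub>M UNIV (\<lambda>_. borel)))"
    by (simp only:)
  have "prob {w \<in> space M. x0 w \<in> X \<and> (\<forall>i<t. lam i w \<in> Y i)} = prob ((x0 -` X \<inter> space M) \<inter> ?L)"
    by (rule arg_cong[where f = prob]) auto
  also have "\<dots> = prob (x0 -` X \<inter> space M) * prob ?L"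
    by (rule indep_setD[OF x0_indep_lam in_vimage_algebra[OF X] L])
  finally show ?thesis
    by (simp only: prob_lam_prefix[OF Y])
qed

lemma indep_set_history_lam:
  "indep_set (history t) {lam t -` C \<inter> space M | C. C \<in> sets borel}"
proof (rule indep_setI)
  fix a b
  assume "a \<in> history t" "b \<in> {lam t -` C \<inter> space M | C. C \<in> sets borel}"
  obtain X Y where X: "X \<in> sets borel" and "\<forall>i. Y i \<in> sets (borel :: real measure)"
    and a: "a = {w \<in> space M. x0 w \<in> X \<and> (\<forall>i<t. lam i w \<in> Y i)}"
    using \<open>a \<in> history t\<close> by (rule history_eventE)
  then have Y: "Y i \<in> sets borel" for i by blast
  obtain C where C: "C \<in> sets borel" and b: "b = lam t -` C \<inter> space M"
    using \<open>b \<in> {lam t -` C \<inter> space M | C. C \<in> sets borel}\<close> by blast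
  define Y' where "Y' i = (if i < t then Y i else C)" for i
  have Y': "Y' i \<in> sets borel" for i
    using Y C by (simp add: Y'_def)
  have "a \<inter> b = {w \<in> space M. x0 w \<in> X \<and> (\<forall>i<Suc t. lam i w \<in> Y' i)}"
    by (auto simp: a b Y'_def less_Suc_eq)
  then have "prob (a \<inter> b) = prob (x0 -` X \<inter> space M) * (\<Prod>i<Suc t. prob (lam i -` Y' i \<inter> space M))"
    using prob_history_event[OF X Y'] by simp
  also have "\<dots> = prob (x0 -` X \<inter> space M) * (\<Prod>i<t. prob (lam i -` Y i \<inter> space M)) * prob b"
    by (simp add: b Y'_def)
  also have "\<dots> = prob a * prob b"
    using prob_history_event[OF X Y] by (simp add: a)
  finally show "prob (a \<inter> b) = prob a * prob b" .
qed (use history_subset_events in auto)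

lemma sets_sigma_history: "sets (sigma (space M) (history t)) = sigma_sets (space M) (history t)"
  using history_subset_events sets.sets_into_space by (intro sets_measure_of) blast

lemma traj_measurable_history:
  "traj A B K lam x0 t \<in> borel_measurable (sigma (space M) (history t))"
proof (rule measurable_traj)
  show "x0 \<in> borel_measurable (sigma (space M) (history t))"
  proof (rule measurableI)
    fix X :: "(real^'n) set"
    assume "X \<in> sets borel"
    then have "{w \<in> space M. x0 w \<in> X \<and> (\<forall>i<t. lam i w \<in> UNIV)} \<in> history t"
      by (intro history_eventI) auto
    then show "x0 -` X \<inter> space (sigma (space M) (history t)) \<in> sets (sigma (space M) (history t))"
      unfolding space_measure_of_conv sets_sigma_history by (auto simp: vimage_def Int_def conj_commute)
  qed simp
  fix i
  assume "i < t"
  show "lam i \<in> borel_measurable (sigma (space M) (history t))"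
  proof (rule measurableI)
    fix C :: "real set"
    assume "C \<in> sets borel"
    then have "{w \<in> space M. x0 w \<in> UNIV \<and> (\<forall>j<t. lam j w \<in> (if j = i then C else UNIV))} \<in> history t"
      by (intro history_eventI) auto
    moreover have "{w \<in> space M. x0 w \<in> UNIV \<and> (\<forall>j<t. lam j w \<in> (if j = i then C else UNIV))}
        = lam i -` C \<inter> space M"
      using \<open>i < t\<close> by auto
    ultimately show "lam i -` C \<inter> space (sigma (space M) (history t)) \<in> sets (sigma (space M) (history t))"
      unfolding space_measure_of_conv sets_sigma_history by auto
  qed simp
qed

lemma indep_var_traj_lam:
  fixes h :: "real^'n \<Rightarrow> real"
  assumes h [measurable]: "h \<in> borel_measurable borel"
  shows "indep_var borel (\<lambda>w. h (traj A B K lam x0 t w)) borel (lam t)"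
  unfolding indep_var_eq
proof (intro conjI)
  let ?L = "{lam t -` C \<inter> space M | C. C \<in> sets borel}"
  have h_traj: "(\<lambda>w. h (traj A B K lam x0 t w)) \<in> borel_measurable (sigma (space M) (history t))"
    using measurable_compose[OF traj_measurable_history[of A B K t] h] .
  have preimage: "(\<lambda>w. h (traj A B K lam x0 t w)) -` X \<inter> space M \<in> sigma_sets (space M) (history t)"
    if "X \<in> sets borel" for X
    using measurable_sets[OF h_traj that] by (simp only: space_measure_of_conv sets_sigma_history)
  have "Int_stable ?L"
    using sets.Int_stable[of "vimage_algebra (space M) (lam t) borel"]
    by (simp add: sets_vimage_algebra2)
  then have "indep_set (sigma_sets (space M) (history t)) (sigma_sets (space M) ?L)"
    by (intro indep_set_sigma_sets indep_set_history_lam Int_stable_history)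
  moreover have "sigma_sets (space M) {(\<lambda>w. h (traj A B K lam x0 t w)) -` X \<inter> space M | X. X \<in> sets borel}
      \<subseteq> sigma_sets (space M) (history t)"
    using preimage by (intro sigma_sets_mono) auto
  ultimately show "indep_set
      (sigma_sets (space M) {(\<lambda>w. h (traj A B K lam x0 t w)) -` X \<inter> space M | X. X \<in> sets borel})
      (sigma_sets (space M) ?L)"
    unfolding indep_sets2_eq by blast
qed simp_all

lemma expected_quad_form_step:
  fixes P :: "real^'n^'n"
  shows "(\<integral>w. quad_form P (traj A B K lam x0 (Suc t) w) \<partial>M)
       = (\<integral>w. q * quad_form P (A *v traj A B K lam x0 t w)
              + (1 - q) * quad_form P (A *v traj A B K lam x0 t w + B *v (K *v traj A B K lam x0 t w)) \<partial>M)"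
proof -
  let ?x = "traj A B K lam x0 t"
  define d where "d y = quad_form P (A *v y + B *v (K *v y)) - quad_form P (A *v y)" for y
  have convex_combination: "a + (1 - q) * (b - a) = q * a + (1 - q) * b" for a b :: real
    by (simp add: algebra_simps)
  have integrable_d: "integrable M (\<lambda>w. d (?x w))"
    unfolding d_def
    by (intro Bochner_Integration.integrable_diff integrable_quad_form_closed_loop
              integrable_quad_form_matrix_traj)
  have indep: "indep_var borel (\<lambda>w. d (?x w)) borel (lam t)"
    by (rule indep_var_traj_lam) (simp add: d_def)
  have integrable_d_lam: "integrable M (\<lambda>w. d (?x w) * lam t w)"
    by (rule indep_var_integrable[OF indep integrable_d integrable_lam])
  have d_lam: "(\<integral>w. d (?x w) * lam t w \<partial>M) = (1 - q) * (\<integral>w. d (?x w) \<partial>M)"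
    using indep_var_lebesgue_integral[OF indep integrable_d integrable_lam]
    by (simp add: integral_lam mult.commute)
  have "quad_form P (traj A B K lam x0 (Suc t) w) = quad_form P (A *v ?x w) + d (?x w) * lam t w"
    if "w \<in> space M" for w
    using lam_values[OF that, of t] by (auto simp: d_def)
  then have "(\<integral>w. quad_form P (traj A B K lam x0 (Suc t) w) \<partial>M)
      = (\<integral>w. quad_form P (A *v ?x w) + d (?x w) * lam t w \<partial>M)"
    by (rule Bochner_Integration.integral_cong[OF refl])
  also have "\<dots> = (\<integral>w. quad_form P (A *v ?x w) \<partial>M) + (1 - q) * (\<integral>w. d (?x w) \<partial>M)"
    using Bochner_Integration.integral_add[OF integrable_quad_form_matrix_traj integrable_d_lam] d_lam
    by simp
  also have "\<dots> = (\<integral>w. quad_form P (A *v ?x w) \<partial>M)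
      + (1 - q) * ((\<integral>w. quad_form P (A *v ?x w + B *v (K *v ?x w)) \<partial>M) - (\<integral>w. quad_form P (A *v ?x w) \<partial>M))"
    unfolding d_def
    by (simp only: Bochner_Integration.integral_diff[OF integrable_quad_form_closed_loop
                     integrable_quad_form_matrix_traj])
  also have "\<dots> = q * (\<integral>w. quad_form P (A *v ?x w) \<partial>M)
      + (1 - q) * (\<integral>w. quad_form P (A *v ?x w + B *v (K *v ?x w)) \<partial>M)"
    by (rule convex_combination)
  also have "\<dots> = (\<integral>w. q * quad_form P (A *v ?x w) + (1 - q) * quad_form P (A *v ?x w + B *v (K *v ?x w)) \<partial>M)"
    by (subst Bochner_Integration.integral_add)
       (simp_all add: integrable_quad_form_matrix_traj integrable_quad_form_closed_loop)
  finally show ?thesis .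
qed

lemma expected_quad_form_decrease:
  fixes P :: "real^'n^'n"
  assumes decrease: "\<And>x. q * quad_form P (A *v x) + (1 - q) * quad_form P (A *v x + B *v (K *v x))
                       \<le> quad_form P x - c * (x \<bullet> x)"
  shows "(\<integral>w. quad_form P (traj A B K lam x0 (Suc t) w) \<partial>M)
      \<le> (\<integral>w. quad_form P (traj A B K lam x0 t w) \<partial>M)
        - c * (\<integral>w. traj A B K lam x0 t w \<bullet> traj A B K lam x0 t w \<partial>M)"
proof -
  let ?x = "traj A B K lam x0 t"
  have "(\<integral>w. quad_form P (traj A B K lam x0 (Suc t) w) \<partial>M)
      \<le> (\<integral>w. quad_form P (?x w) - c * (?x w \<bullet> ?x w) \<partial>M)"
    unfolding expected_quad_form_step
  proof (rule Bochner_Integration.integral_mono)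
    show "integrable M (\<lambda>w. q * quad_form P (A *v ?x w) + (1 - q) * quad_form P (A *v ?x w + B *v (K *v ?x w)))"
      by (intro Bochner_Integration.integrable_add integrable_mult_right
                integrable_quad_form_matrix_traj integrable_quad_form_closed_loop)
    show "integrable M (\<lambda>w. quad_form P (?x w) - c * (?x w \<bullet> ?x w))"
      by (intro Bochner_Integration.integrable_diff integrable_mult_right
                integrable_quad_form_traj integrable_inner_traj)
  qed (rule decrease)
  also have "\<dots> = (\<integral>w. quad_form P (?x w) \<partial>M) - c * (\<integral>w. ?x w \<bullet> ?x w \<partial>M)"
    using Bochner_Integration.integral_diff[OF integrable_quad_form_traj
            integrable_mult_right[OF integrable_inner_traj]]
    by simp
  finally show ?thesis .
qed

lemma mean_square_stable_of_lyapunov: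
  fixes P W :: "real^'n^'n"
  assumes P: "posdef P" and W: "posdef W"
    and decrease: "\<And>x. q * quad_form P (A *v x) + (1 - q) * quad_form P (A *v x + B *v (K *v x))
                       \<le> quad_form P x - quad_form W x"
  shows "(\<lambda>t. \<integral>w. traj A B K lam x0 t w \<bullet> traj A B K lam x0 t w \<partial>M) \<longlonglongrightarrow> 0"
proof -
  obtain c where "c > 0" and c: "\<And>x. c * (x \<bullet> x) \<le> quad_form W x"
    using posdef_quad_form_lower_bound[OF W] by blast
  have "q * quad_form P (A *v x) + (1 - q) * quad_form P (A *v x + B *v (K *v x))
      \<le> quad_form P x - c * (x \<bullet> x)" for x
    using decrease[of x] c[of x] by linarith
  then have V_decrease: "(\<integral>w. quad_form P (traj A B K lam x0 (Suc t) w) \<partial>M)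
      \<le> (\<integral>w. quad_form P (traj A B K lam x0 t w) \<partial>M)
        - c * (\<integral>w. traj A B K lam x0 t w \<bullet> traj A B K lam x0 t w \<partial>M)" for t
    by (rule expected_quad_form_decrease)
  have V_nonneg: "0 \<le> (\<integral>w. quad_form P (traj A B K lam x0 t w) \<partial>M)" for t
    using posdef_nonneg[OF P] by simp
  have N_nonneg: "0 \<le> (\<integral>w. traj A B K lam x0 t w \<bullet> traj A B K lam x0 t w \<partial>M)" for t
    by simp
  show ?thesis
    by (rule tendsto_zero_of_lyapunov_decrease[where V = "\<lambda>t. \<integral>w. quad_form P (traj A B K lam x0 t w) \<partial>M",
          OF \<open>c > 0\<close> N_nonneg V_nonneg V_decrease])
qed

end

theorem theorem2:
  fixes A Q Phat :: "real^'n^'n" and B :: "real^'m^'n" and R :: "real^'m^'m"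
    and q qhat :: real
    and M :: "'a measure" and x0 :: "'a \<Rightarrow> real^'n" and lam :: "nat \<Rightarrow> 'a \<Rightarrow> real"
  assumes Q: "posdef Q" and R: "posdef R" and stab: "stabilizable A B"
    and q: "0 < q" "q < 1" and qc: "q < qcrit A B Q R"
    and qhat: "0 \<le> qhat" "qhat \<le> 1" and qhatc: "qhat < qcrit A B Q R"
    and Phat: "posdef Phat" "Phat = ric qhat A B Q R Phat"
    and prob: "prob_space M"
    and x0_meas: "x0 \<in> borel_measurable M"
    and x0_var: "integrable M (\<lambda>w. norm (x0 w) ^ 2)"
    and lam_val: "\<And>t w. w \<in> space M \<Longrightarrow> lam t w \<in> {0, 1}"
    and lam_indep: "prob_space.indep_vars M (\<lambda>_. borel) lam UNIV"
    and lam_dist: "\<And>t. measure M {w \<in> space M. lam t w = 0} = q"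
    and x0_indep: "prob_space.indep_set M (sets (vimage_algebra (space M) x0 borel))
         (sets (vimage_algebra (space M) (\<lambda>w t. lam t w) (Pi\<^sub>M UNIV (\<lambda>_. borel))))"
  shows "(posdef (Q + (1 - q) *\<^sub>R (transpose (gain A B R Phat) ** R ** gain A B R Phat)
            - (q - qhat) *\<^sub>R (transpose A ** Phat ** B ** matrix_inv (R + transpose B ** Phat ** B)
                               ** transpose B ** Phat ** A))
          \<longrightarrow> (\<lambda>t. integral\<^sup>L M (\<lambda>w. traj A B (gain A B R Phat) lam x0 t w
                                   \<bullet> traj A B (gain A B R Phat) lam x0 t w)) \<longlonglongrightarrow> 0)
       \<and> (q \<le> qhat \<longrightarrow>
          posdef (Q + (1 - q) *\<^sub>R (transpose (gain A B R Phat) ** R ** gain A B R Phat)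
            - (q - qhat) *\<^sub>R (transpose A ** Phat ** B ** matrix_inv (R + transpose B ** Phat ** B)
                               ** transpose B ** Phat ** A)))"
proof -
  \<comment> \<open>Stabilizability and the bounds by qcrit only guarantee that Phat exists; Phat is given here.\<close>
  interpret packet_loss_channel M x0 lam q
    using prob x0_meas x0_var lam_val lam_indep lam_dist x0_indep
    by (simp add: packet_loss_channel_def packet_loss_channel_axioms_def)
  show ?thesis
  proof (intro conjI impI)
    assume "posdef (stability_margin q qhat A B Q R Phat)"
    with Phat(1) show "(\<lambda>t. \<integral>w. traj A B (gain A B R Phat) lam x0 t w \<bullet> traj A B (gain A B R Phat) lam x0 t w \<partial>M)
        \<longlonglongrightarrow> 0"
      by (rule mean_square_stable_of_lyapunov) (simp add: riccati_lyapunov_identity[OF Phat(1) R Phat(2)])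
  next
    assume "q \<le> qhat"
    with Phat(1) R Q q(2) show "posdef (stability_margin q qhat A B Q R Phat)"
      by (intro stability_margin_posdef) auto
  qed
qed

end
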